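(* Let $m\ge 1$ be a fixed integer. Let $(r_t)_{t\in\mathbb{Z}}$ be a real-valued process with $r_t=\sigma\epsilon_t$, where $\sigma>0$ is a constant and $(\epsilon_t)$ is a random process. Let $a_t=1$ if $r_t\neq 0$ and $a_t=0$ if $r_t=0$. Assume $E(\epsilon_t\mid a_t=1)=0$, $E(\epsilon_t^2\mid a_t=1)=1$, and that $P(a_ta_{t-h}=1)>0$ for $h=0,1,\dots,m$. Suppose that $(r_t)$ is strictly stationary and ergodic, with $E(r_t^2)<\infty$ and $E(r_t)=0$. Given observations $r_1,\dots,r_n$, define for $h=0,1,\dots,m$ $$\hat{\gamma}_0(h)=\frac1n\sum_{t=1+h}^n r_tr_{t-h},\quad \hat\rho_0(h)=\frac{\hat\gamma_0(h)}{\hat\gamma_0(0)},\quad \hat{\gamma}_a(h)=\frac1n\sum_{t=h+1}^n a_ta_{t-h},$$ and $\widehat{\Gamma}_{pr}(m)=(\hat\rho_{pr}(1),\dots,\hat\rho_{pr}(m))'$ with $\hat\rho_{pr}(h)=\hat\rho_0(h)\,\hat\gamma_a(0)/\hat\gamma_a(h)$. Let $\rho_\epsilon(h)=E(\epsilon_t\epsilon_{t-h}\mid a_ta_{t-h}=1)$ (which does not depend on $t$) and $\Gamma_\epsilon(m)=(\rho_\epsilon(1),\dots,\rho_\epsilon(m))'$. Then $\widehat{\Gamma}_{pr}(m)\to\Gamma_\epsilon(m)$ almost surely as $n\to\infty$.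
   Context: $a_t$ indicates a nonzero return (a price change) at date $t$. The quantities $\rho_\epsilon(h)$ are the serial correlations of the price changes. *)

theory Defs
  imports "HOL-Probability.Probability"
begin

definition strictly_stationary :: "'a measure \<Rightarrow> (int \<Rightarrow> 'a \<Rightarrow> real) \<Rightarrow> bool" where
  "strictly_stationary M X \<longleftrightarrow>
     (\<forall>I k. finite I \<longrightarrow>
        distr M (PiM I (\<lambda>_. borel)) (\<lambda>\<omega>. \<lambda>i\<in>I. X (i + k) \<omega>)
      = distr M (PiM I (\<lambda>_. borel)) (\<lambda>\<omega>. \<lambda>i\<in>I. X i \<omega>))"

definition shift_invariant :: "(int \<Rightarrow> real) set \<Rightarrow> bool" where
  "shift_invariant A \<longleftrightarrow>
     A \<in> sets (PiM UNIV (\<lambda>_::int. (borel :: real measure))) \<and>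
     (\<forall>x. x \<in> A \<longleftrightarrow> (\<lambda>t. x (t + 1)) \<in> A)"

definition ergodic_process :: "'a measure \<Rightarrow> (int \<Rightarrow> 'a \<Rightarrow> real) \<Rightarrow> bool" where
  "ergodic_process M X \<longleftrightarrow>
     (\<forall>A. shift_invariant A \<longrightarrow>
        measure M {\<omega> \<in> space M. (\<lambda>t. X t \<omega>) \<in> A} = 0 \<or>
        measure M {\<omega> \<in> space M. (\<lambda>t. X t \<omega>) \<in> A} = 1)"

definition nz_ind :: "(int \<Rightarrow> 'a \<Rightarrow> real) \<Rightarrow> int \<Rightarrow> 'a \<Rightarrow> real" where
  "nz_ind r t \<omega> = (if r t \<omega> \<noteq> 0 then 1 else 0)"

definition gamma0_hat :: "(int \<Rightarrow> 'a \<Rightarrow> real) \<Rightarrow> nat \<Rightarrow> nat \<Rightarrow> 'a \<Rightarrow> real" where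
  "gamma0_hat r n h \<omega> = (1 / real n) * (\<Sum>t\<in>{int h + 1 .. int n}. r t \<omega> * r (t - int h) \<omega>)"

definition rho0_hat :: "(int \<Rightarrow> 'a \<Rightarrow> real) \<Rightarrow> nat \<Rightarrow> nat \<Rightarrow> 'a \<Rightarrow> real" where
  "rho0_hat r n h \<omega> = gamma0_hat r n h \<omega> / gamma0_hat r n 0 \<omega>"

definition gammaa_hat :: "(int \<Rightarrow> 'a \<Rightarrow> real) \<Rightarrow> nat \<Rightarrow> nat \<Rightarrow> 'a \<Rightarrow> real" where
  "gammaa_hat r n h \<omega> = (1 / real n) * (\<Sum>t\<in>{int h + 1 .. int n}. nz_ind r t \<omega> * nz_ind r (t - int h) \<omega>)"

definition rho_pr_hat :: "(int \<Rightarrow> 'a \<Rightarrow> real) \<Rightarrow> nat \<Rightarrow> nat \<Rightarrow> 'a \<Rightarrow> real" where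
  "rho_pr_hat r n h \<omega> = rho0_hat r n h \<omega> * gammaa_hat r n 0 \<omega> / gammaa_hat r n h \<omega>"

definition cond_exp_event :: "'a measure \<Rightarrow> ('a \<Rightarrow> real) \<Rightarrow> 'a set \<Rightarrow> real" where
  "cond_exp_event M X B = (\<integral>\<omega>. indicator B \<omega> * X \<omega> \<partial>M) / measure M B"

definition both_nz :: "'a measure \<Rightarrow> (int \<Rightarrow> 'a \<Rightarrow> real) \<Rightarrow> int \<Rightarrow> nat \<Rightarrow> 'a set" where
  "both_nz M r t h = {\<omega> \<in> space M. nz_ind r t \<omega> * nz_ind r (t - int h) \<omega> = 1}"

end

theory Submission
  imports Defs "HOL-Real_Asymp.Real_Asymp"
begin

text \<open>Every sample moment entering \<open>\<rho>_pr(h)\<close> is the time average of a lagged functional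
  \<open>q(r_t, r_{t-h})\<close> of the stationary ergodic process, so it converges almost surely to
  \<open>E q(r_t, r_{t-h})\<close> by Birkhoff's ergodic theorem. Birkhoff's theorem is proved along Garsia's
  route: by the maximal ergodic inequality, a stationary ergodic sequence with negative mean has
  almost surely bounded partial sums. Since \<open>r_t r_{t-h}\<close> vanishes off the event
  \<open>a_t a_{t-h} = 1\<close>, the limit of \<open>\<gamma>_0(h)\<close> is \<open>\<sigma>\<^sup>2 \<rho>_\<epsilon>(h) P(a_t a_{t-h} = 1)\<close>, while
  \<open>\<gamma>_a(h)\<close> tends to \<open>P(a_t a_{t-h} = 1)\<close>; the normalisation \<open>E(\<epsilon>_t\<^sup>2 | a_t = 1) = 1\<close> makes
  \<open>\<rho>_\<epsilon>(0) = 1\<close>, so every factor except \<open>\<rho>_\<epsilon>(h)\<close> cancels in the limit of the ratio.\<close>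

section \<open>Stationary ergodic sequences\<close>

definition stationary_seq :: "'a measure \<Rightarrow> (nat \<Rightarrow> 'a \<Rightarrow> real) \<Rightarrow> bool" where
  "stationary_seq M Y \<longleftrightarrow>
     (\<forall>n. distr M (PiM {..<n} (\<lambda>_. borel)) (\<lambda>\<omega>. \<lambda>i\<in>{..<n}. Y (Suc i) \<omega>)
        = distr M (PiM {..<n} (\<lambda>_. borel)) (\<lambda>\<omega>. \<lambda>i\<in>{..<n}. Y i \<omega>))"

definition ergodic_seq :: "'a measure \<Rightarrow> (nat \<Rightarrow> 'a \<Rightarrow> real) \<Rightarrow> bool" where
  "ergodic_seq M Y \<longleftrightarrow>
     (\<forall>A \<in> sets (PiM UNIV (\<lambda>_. borel)). (\<forall>x. x \<in> A \<longleftrightarrow> (\<lambda>i. x (Suc i)) \<in> A) \<longrightarrow>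
        measure M {\<omega> \<in> space M. (\<lambda>i. Y i \<omega>) \<in> A} \<in> {0, 1})"

lemma distr_eq_compose:
  assumes "distr M N X = distr M N X'" "X \<in> measurable M N" "X' \<in> measurable M N"
    and "g \<in> measurable N K"
  shows "distr M K (\<lambda>\<omega>. g (X \<omega>)) = distr M K (\<lambda>\<omega>. g (X' \<omega>))"
  using distr_distr[OF assms(4,2)] distr_distr[OF assms(4,3)] assms(1) by (simp add: comp_def)

lemma integral_eq_if_distr_eq:
  fixes f :: "'b \<Rightarrow> real"
  assumes "distr M N X = distr M N X'" "X \<in> measurable M N" "X' \<in> measurable M N"
    and "f \<in> borel_measurable N"
  shows "(\<integral>\<omega>. f (X \<omega>) \<partial>M) = (\<integral>\<omega>. f (X' \<omega>) \<partial>M)"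
  using integral_distr[OF assms(2,4)] integral_distr[OF assms(3,4)] assms(1) by simp

lemma stationary_seq_integral_Suc:
  fixes F :: "(nat \<Rightarrow> real) \<Rightarrow> real"
  assumes "stationary_seq M Y" "\<And>i. Y i \<in> borel_measurable M"
    and "F \<in> borel_measurable (PiM {..<n} (\<lambda>_. borel))"
  shows "(\<integral>\<omega>. F (\<lambda>i\<in>{..<n}. Y (Suc i) \<omega>) \<partial>M) = (\<integral>\<omega>. F (\<lambda>i\<in>{..<n}. Y i \<omega>) \<partial>M)"
  using assms unfolding stationary_seq_def
  by (intro integral_eq_if_distr_eq[of M _ "\<lambda>\<omega>. \<lambda>i\<in>{..<n}. Y (Suc i) \<omega>" "\<lambda>\<omega>. \<lambda>i\<in>{..<n}. Y i \<omega>"]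
      measurable_restrict) auto

lemma stationary_seq_compose:
  assumes "stationary_seq M Y" "\<And>i. Y i \<in> borel_measurable M" "g \<in> borel_measurable borel"
  shows "stationary_seq M (\<lambda>i \<omega>. g (Y i \<omega>))"
  unfolding stationary_seq_def
proof
  fix n :: nat
  let ?N = "PiM {..<n} (\<lambda>_. borel :: real measure)"
  have "(\<lambda>x. \<lambda>i\<in>{..<n}. g (x i)) \<in> measurable ?N ?N"
    using assms(3) by measurable
  from distr_eq_compose[OF _ _ _ this, of M "\<lambda>\<omega>. \<lambda>i\<in>{..<n}. Y (Suc i) \<omega>" "\<lambda>\<omega>. \<lambda>i\<in>{..<n}. Y i \<omega>"] assms(1,2)
  show "distr M ?N (\<lambda>\<omega>. \<lambda>i\<in>{..<n}. g (Y (Suc i) \<omega>)) = distr M ?N (\<lambda>\<omega>. \<lambda>i\<in>{..<n}. g (Y i \<omega>))"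
    unfolding stationary_seq_def by (simp add: measurable_restrict cong: restrict_cong)
qed

lemma ergodic_seq_compose:
  assumes "ergodic_seq M Y" "g \<in> borel_measurable borel"
  shows "ergodic_seq M (\<lambda>i \<omega>. g (Y i \<omega>))"
  unfolding ergodic_seq_def
proof (intro ballI impI)
  fix A :: "(nat \<Rightarrow> real) set"
  assume A: "A \<in> sets (PiM UNIV (\<lambda>_. borel))" and shift: "\<forall>x. x \<in> A \<longleftrightarrow> (\<lambda>i. x (Suc i)) \<in> A"
  let ?B = "(\<lambda>x i. g (x i)) -` A"
  have "(\<lambda>x i. g (x i)) \<in> measurable (PiM UNIV (\<lambda>_. borel)) (PiM UNIV (\<lambda>_::nat. borel))"
    using assms(2) by (intro measurable_PiM_single') auto
  from measurable_sets[OF this A] have "?B \<in> sets (PiM UNIV (\<lambda>_. borel))"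
    by (simp add: space_PiM)
  moreover have "\<forall>x. x \<in> ?B \<longleftrightarrow> (\<lambda>i. x (Suc i)) \<in> ?B"
  proof
    fix x :: "nat \<Rightarrow> real"
    show "x \<in> ?B \<longleftrightarrow> (\<lambda>i. x (Suc i)) \<in> ?B" using shift[THEN spec, of "\<lambda>i. g (x i)"] by simp
  qed
  ultimately show "measure M {\<omega> \<in> space M. (\<lambda>i. g (Y i \<omega>)) \<in> A} \<in> {0, 1}"
    using assms(1) unfolding ergodic_seq_def by auto
qed

section \<open>Birkhoff's ergodic theorem\<close>

lemma integrable_partial_sums_Max:
  fixes Y :: "nat \<Rightarrow> 'a \<Rightarrow> real"
  assumes "\<And>i. integrable M (Y i)"
  shows "integrable M (\<lambda>\<omega>. Max ((\<lambda>k. \<Sum>i<k. Y i \<omega>) ` {..n}))"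
  by (induction n) (simp_all add: atMost_Suc assms)

lemma maximal_ergodic_inequality:
  fixes Y :: "nat \<Rightarrow> 'a \<Rightarrow> real"
  assumes "stationary_seq M Y" and [measurable]: "\<And>i. Y i \<in> borel_measurable M"
    and "\<And>i. integrable M (Y i)"
  shows "0 \<le> (\<integral>\<omega>. indicator {\<omega> \<in> space M. 0 < (MAX k\<in>{..n}. \<Sum>i<k. Y i \<omega>)} \<omega> * Y 0 \<omega> \<partial>M)"
proof -
  define S where "S k \<omega> = (\<Sum>i<k. Y i \<omega>)" for k \<omega>
  define Mx where "Mx \<omega> = (MAX k\<in>{..n}. S k \<omega>)" for \<omega>
  define Mx' where "Mx' \<omega> = (MAX k\<in>{..n}. \<Sum>i<k. Y (Suc i) \<omega>)" for \<omega>
  define B where "B = {\<omega> \<in> space M. 0 < Mx \<omega>}"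
  have "B \<in> sets M"
    unfolding B_def Mx_def S_def by measurable
  have Mx_int: "integrable M Mx" and Mx'_int: "integrable M Mx'"
    unfolding Mx_def Mx'_def S_def using assms(3) by (auto intro: integrable_partial_sums_Max)
  have shift_eq: "(\<integral>\<omega>. Mx' \<omega> \<partial>M) = (\<integral>\<omega>. Mx \<omega> \<partial>M)"
  proof -
    define F where "F x = (MAX k\<in>{..n}. \<Sum>i<k. x i)" for x :: "nat \<Rightarrow> real"
    have "F \<in> borel_measurable (PiM {..<n} (\<lambda>_. borel))"
      unfolding F_def by measurable
    moreover have F_restrict: "F (\<lambda>i\<in>{..<n}. Z i) = (MAX k\<in>{..n}. \<Sum>i<k. Z i)" for Z
      unfolding F_def by (intro arg_cong[where f=Max] image_cong refl sum.cong) auto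
    ultimately show ?thesis
      using stationary_seq_integral_Suc[OF assms(1,2), of F n]
      by (simp add: Mx_def Mx'_def S_def F_restrict)
  qed
  \<comment> \<open>Garsia: on \<open>B\<close> the maximum is some \<open>S k \<omega>\<close> with \<open>k \<ge> 1\<close>, and
    \<open>S k \<omega> = Y 0 \<omega> + (\<Sum>i<k - 1. Y (Suc i) \<omega>) \<le> Y 0 \<omega> + Mx' \<omega>\<close>.\<close>
  have garsia: "Mx \<omega> - Mx' \<omega> \<le> indicator B \<omega> * Y 0 \<omega>" if "\<omega> \<in> space M" for \<omega>
  proof (cases "\<omega> \<in> B")
    case True
    obtain k where "k \<le> n" "Mx \<omega> = S k \<omega>"
      using Max_in[of "(\<lambda>k. S k \<omega>) ` {..n}"] unfolding Mx_def by fastforce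
    moreover have "k \<noteq> 0" using True calculation by (intro notI) (simp add: B_def S_def)
    ultimately obtain j where "j < n" "Mx \<omega> = S (Suc j) \<omega>"
      by (metis Suc_le_lessD not0_implies_Suc)
    then have "Mx \<omega> = Y 0 \<omega> + (\<Sum>i<j. Y (Suc i) \<omega>)"
      unfolding S_def by (simp only: sum.lessThan_Suc_shift)
    moreover have "(\<Sum>i<j. Y (Suc i) \<omega>) \<le> Mx' \<omega>"
      unfolding Mx'_def using \<open>j < n\<close> by (intro Max_ge) auto
    ultimately show ?thesis using True by simp
  next
    case False
    have "0 \<le> Mx' \<omega>" unfolding Mx'_def by (rule Max_ge_iff[THEN iffD2]) (auto intro!: bexI[of _ 0])
    with False that show ?thesis by (simp add: B_def)
  qed
  have "0 = (\<integral>\<omega>. Mx \<omega> - Mx' \<omega> \<partial>M)"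
    using shift_eq Mx_int Mx'_int by simp
  also have "\<dots> \<le> (\<integral>\<omega>. indicator B \<omega> * Y 0 \<omega> \<partial>M)"
    using garsia Mx_int Mx'_int integrable_mult_indicator[OF \<open>B \<in> sets M\<close> assms(3)[of 0]]
    by (intro integral_mono) auto
  finally show ?thesis unfolding B_def Mx_def S_def .
qed

lemma unbounded_partial_sums_Suc_iff:
  fixes s :: "nat \<Rightarrow> real"
  shows "(\<forall>K::nat. \<exists>n. real K < (\<Sum>i<n. s (Suc i))) \<longleftrightarrow> (\<forall>K::nat. \<exists>n. real K < (\<Sum>i<n. s i))"
proof -
  define C where "C = nat \<lceil>\<bar>s 0\<bar>\<rceil>"
  have C: "\<bar>s 0\<bar> \<le> real C" unfolding C_def by linarith
  have shift: "(\<Sum>i<Suc n. s i) = s 0 + (\<Sum>i<n. s (Suc i))" for n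
    by (rule sum.lessThan_Suc_shift)
  show ?thesis
  proof (intro iffI allI)
    fix K :: nat
    assume "\<forall>K::nat. \<exists>n. real K < (\<Sum>i<n. s (Suc i))"
    then obtain n where "real (K + C) < (\<Sum>i<n. s (Suc i))" by blast
    then have "real K < (\<Sum>i<Suc n. s i)" using C shift[of n] by simp
    then show "\<exists>n. real K < (\<Sum>i<n. s i)" ..
  next
    fix K :: nat
    assume "\<forall>K::nat. \<exists>n. real K < (\<Sum>i<n. s i)"
    then obtain n where n: "real (K + C) < (\<Sum>i<n. s i)" by blast
    then obtain j where "n = Suc j" by (cases n) auto
    then have "real K < (\<Sum>i<j. s (Suc i))" using n C shift[of j] by simp
    then show "\<exists>n. real K < (\<Sum>i<n. s (Suc i))" ..
  qed
qed

lemma ergodic_seq_unbounded_partial_sums: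
  fixes Y :: "nat \<Rightarrow> 'a \<Rightarrow> real"
  assumes "ergodic_seq M Y"
  shows "measure M {\<omega> \<in> space M. \<forall>K::nat. \<exists>n. real K < (\<Sum>i<n. Y i \<omega>)} \<in> {0, 1}"
proof -
  define U where "U = {x :: nat \<Rightarrow> real. \<forall>K::nat. \<exists>n. real K < (\<Sum>i<n. x i)}"
  have [measurable]: "(\<lambda>x :: nat \<Rightarrow> real. \<Sum>i<n. x i) \<in> borel_measurable (PiM UNIV (\<lambda>_. borel))" for n
    by measurable
  have "U = {x \<in> space (PiM UNIV (\<lambda>_. borel)). \<forall>K::nat. \<exists>n. real K < (\<Sum>i<n. x i)}"
    by (simp add: U_def space_PiM)
  also have "\<dots> \<in> sets (PiM UNIV (\<lambda>_. borel))"
    by measurable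
  finally have "U \<in> sets (PiM UNIV (\<lambda>_. borel))" .
  moreover have "\<forall>x. x \<in> U \<longleftrightarrow> (\<lambda>i. x (Suc i)) \<in> U"
    by (simp add: U_def unbounded_partial_sums_Suc_iff)
  ultimately have "measure M {\<omega> \<in> space M. (\<lambda>i. Y i \<omega>) \<in> U} \<in> {0, 1}"
    using assms unfolding ergodic_seq_def by blast
  then show ?thesis
    by (simp add: U_def)
qed

lemma integral_nonneg_if_AE_partial_sum_pos:
  fixes Y :: "nat \<Rightarrow> 'a \<Rightarrow> real"
  assumes "stationary_seq M Y" and [measurable]: "\<And>i. Y i \<in> borel_measurable M"
    and "\<And>i. integrable M (Y i)" and "AE \<omega> in M. \<exists>k. 0 < (\<Sum>i<k. Y i \<omega>)"
  shows "0 \<le> (\<integral>\<omega>. Y 0 \<omega> \<partial>M)"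
proof -
  define B where "B n = {\<omega> \<in> space M. 0 < (MAX k\<in>{..n}. \<Sum>i<k. Y i \<omega>)}" for n
  have lim: "(\<lambda>n. \<integral>\<omega>. indicator (B n) \<omega> * Y 0 \<omega> \<partial>M) \<longlonglongrightarrow> (\<integral>\<omega>. Y 0 \<omega> \<partial>M)"
  proof (rule integral_dominated_convergence[where w="\<lambda>\<omega>. \<bar>Y 0 \<omega>\<bar>"])
    show "AE \<omega> in M. (\<lambda>n. indicator (B n) \<omega> * Y 0 \<omega>) \<longlonglongrightarrow> Y 0 \<omega>"
      using assms(4) AE_space
    proof eventually_elim
      case (elim \<omega>)
      then obtain k where k: "0 < (\<Sum>i<k. Y i \<omega>)" by blast
      have "\<omega> \<in> B n" if "k \<le> n" for n
      proof -
        have "(\<Sum>i<k. Y i \<omega>) \<le> (MAX j\<in>{..n}. \<Sum>i<j. Y i \<omega>)"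
          using that by (intro Max_ge imageI) auto
        with k elim show ?thesis by (simp add: B_def)
      qed
      then have "\<forall>\<^sub>F n in sequentially. indicator (B n) \<omega> * Y 0 \<omega> = Y 0 \<omega>"
        by (intro eventually_sequentiallyI[of k]) simp
      then show ?case by (rule tendsto_eventually)
    qed
    show "(\<lambda>\<omega>. indicator (B n) \<omega> * Y 0 \<omega>) \<in> borel_measurable M" for n
      unfolding B_def by measurable
    show "AE \<omega> in M. norm (indicator (B n) \<omega> * Y 0 \<omega>) \<le> \<bar>Y 0 \<omega>\<bar>" for n
      by (simp add: indicator_def)
    show "Y 0 \<in> borel_measurable M" by (rule assms(2))
    show "integrable M (\<lambda>\<omega>. \<bar>Y 0 \<omega>\<bar>)" by (rule integrable_abs[OF assms(3)])
  qed
  have "0 \<le> (\<integral>\<omega>. indicator (B n) \<omega> * Y 0 \<omega> \<partial>M)" for n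
    unfolding B_def by (rule maximal_ergodic_inequality[OF assms(1-3)])
  then show ?thesis
    by (intro LIMSEQ_le_const[OF lim]) blast
qed

lemma partial_sums_bounded_above_AE:
  fixes Y :: "nat \<Rightarrow> 'a \<Rightarrow> real"
  assumes "prob_space M" "stationary_seq M Y" "ergodic_seq M Y"
    and [measurable]: "\<And>i. Y i \<in> borel_measurable M" and "\<And>i. integrable M (Y i)"
    and "(\<integral>\<omega>. Y 0 \<omega> \<partial>M) < 0"
  shows "AE \<omega> in M. \<exists>K::nat. \<forall>n. (\<Sum>i<n. Y i \<omega>) \<le> real K"
proof -
  interpret prob_space M by (rule assms(1))
  define E where "E = {\<omega> \<in> space M. \<forall>K::nat. \<exists>n. real K < (\<Sum>i<n. Y i \<omega>)}"
  have E_sets: "E \<in> sets M"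
    unfolding E_def by measurable
  have "prob E \<noteq> 1"
  proof
    assume "prob E = 1"
    then have "AE \<omega> in M. \<omega> \<in> E"
      by (rule prob_eq_1[OF E_sets, THEN iffD1])
    then have "AE \<omega> in M. \<exists>k. 0 < (\<Sum>i<k. Y i \<omega>)"
    proof eventually_elim
      case (elim \<omega>)
      then have "\<exists>k. real 0 < (\<Sum>i<k. Y i \<omega>)"
        unfolding E_def by blast
      then show ?case by simp
    qed
    with assms(2,4,5) have "0 \<le> (\<integral>\<omega>. Y 0 \<omega> \<partial>M)"
      by (rule integral_nonneg_if_AE_partial_sum_pos)
    with assms(6) show False by linarith
  qed
  with ergodic_seq_unbounded_partial_sums[OF assms(3)] have "prob E = 0"
    by (simp add: E_def)
  then have "AE \<omega> in M. \<omega> \<notin> E"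
    by (rule prob_eq_0[OF E_sets, THEN iffD1])
  with AE_space show ?thesis
    by eventually_elim (auto simp: E_def not_less)
qed

lemma eventually_average_less:
  fixes y :: "nat \<Rightarrow> real"
  assumes "\<And>n. (\<Sum>i<n. y i - c) \<le> K" and "c < d"
  shows "\<forall>\<^sub>F n in sequentially. (\<Sum>i<n. y i) / real n < d"
proof -
  have "\<forall>\<^sub>F n in sequentially. K / real n < d - c"
    using lim_const_over_n[of K] assms(2) by (intro order_tendstoD) auto
  with eventually_gt_at_top[of 0] show ?thesis
  proof eventually_elim
    case (elim n)
    have "(\<Sum>i<n. y i) = (\<Sum>i<n. y i - c) + real n * c"
      by (simp add: sum_subtractf)
    also have "\<dots> \<le> K + real n * c"
      using assms(1) by simp
    finally show ?case
      using elim by (simp add: field_simps)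
  qed
qed

lemma AE_eventually_average_less:
  fixes Y :: "nat \<Rightarrow> 'a \<Rightarrow> real"
  assumes "prob_space M" "stationary_seq M Y" "ergodic_seq M Y"
    and [measurable]: "\<And>i. Y i \<in> borel_measurable M" and "\<And>i. integrable M (Y i)"
    and "(\<integral>\<omega>. Y 0 \<omega> \<partial>M) < d"
  shows "AE \<omega> in M. \<forall>\<^sub>F n in sequentially. (\<Sum>i<n. Y i \<omega>) / real n < d"
proof -
  interpret prob_space M by (rule assms(1))
  define c where "c = ((\<integral>\<omega>. Y 0 \<omega> \<partial>M) + d) / 2"
  have "(\<lambda>x. x - c) \<in> borel_measurable borel" by measurable
  then have "AE \<omega> in M. \<exists>K::nat. \<forall>n. (\<Sum>i<n. Y i \<omega> - c) \<le> real K"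
    using assms(1,4,5,6)
      stationary_seq_compose[OF assms(2,4), of "\<lambda>x. x - c"] ergodic_seq_compose[OF assms(3), of "\<lambda>x. x - c"]
    by (intro partial_sums_bounded_above_AE) (auto simp: c_def prob_space)
  moreover have "c < d"
    using assms(6) by (simp add: c_def)
  ultimately show ?thesis
    by (auto elim!: eventually_mono intro: eventually_average_less)
qed

lemma LIMSEQ_if_eventually_abs_less_inverse_Suc:
  fixes f :: "nat \<Rightarrow> real"
  assumes "\<And>k. \<forall>\<^sub>F n in sequentially. \<bar>f n - l\<bar> < 1 / real (Suc k)"
  shows "f \<longlonglongrightarrow> l"
proof (rule tendstoI)
  fix e :: real
  assume "0 < e"
  then obtain k where "1 / real (Suc k) < e" by (rule nat_approx_posE)
  with assms[of k] show "\<forall>\<^sub>F n in sequentially. dist (f n) l < e"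
    by (auto elim: eventually_mono simp: dist_real_def)
qed

theorem birkhoff_ergodic_theorem:
  fixes Y :: "nat \<Rightarrow> 'a \<Rightarrow> real"
  assumes "prob_space M" "stationary_seq M Y" "ergodic_seq M Y"
    and [measurable]: "\<And>i. Y i \<in> borel_measurable M" and "\<And>i. integrable M (Y i)"
  shows "AE \<omega> in M. (\<lambda>n. (\<Sum>i<n. Y i \<omega>) / real n) \<longlonglongrightarrow> (\<integral>\<omega>. Y 0 \<omega> \<partial>M)"
proof -
  define \<mu> where "\<mu> = (\<integral>\<omega>. Y 0 \<omega> \<partial>M)"
  have "AE \<omega> in M. \<forall>\<^sub>F n in sequentially. \<bar>(\<Sum>i<n. Y i \<omega>) / real n - \<mu>\<bar> < 1 / real (Suc k)" for k
  proof -
    have "AE \<omega> in M. \<forall>\<^sub>F n in sequentially. (\<Sum>i<n. Y i \<omega>) / real n < \<mu> + 1 / real (Suc k)"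
      using assms by (intro AE_eventually_average_less) (auto simp: \<mu>_def)
    moreover have "AE \<omega> in M. \<forall>\<^sub>F n in sequentially. (\<Sum>i<n. - Y i \<omega>) / real n < - \<mu> + 1 / real (Suc k)"
      using assms stationary_seq_compose[OF assms(2,4), of uminus] ergodic_seq_compose[OF assms(3), of uminus]
      by (intro AE_eventually_average_less) (auto simp: \<mu>_def)
    ultimately show ?thesis
    proof eventually_elim
      case (elim \<omega>)
      from elim(1,2) show ?case
        by eventually_elim (simp add: sum_negf abs_less_iff)
    qed
  qed
  then have "AE \<omega> in M. \<forall>k. \<forall>\<^sub>F n in sequentially. \<bar>(\<Sum>i<n. Y i \<omega>) / real n - \<mu>\<bar> < 1 / real (Suc k)"
    by (simp add: AE_all_countable)
  then show ?thesis
    unfolding \<mu>_def by eventually_elim (rule LIMSEQ_if_eventually_abs_less_inverse_Suc, blast)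
qed

section \<open>Lagged functionals of a stationary ergodic process\<close>

lemma strictly_stationary_distr_shift:
  assumes "strictly_stationary M X" "finite I"
  shows "distr M (PiM I (\<lambda>_. borel)) (\<lambda>\<omega>. \<lambda>i\<in>I. X (i + k) \<omega>)
       = distr M (PiM I (\<lambda>_. borel)) (\<lambda>\<omega>. \<lambda>i\<in>I. X i \<omega>)"
  using assms unfolding strictly_stationary_def by blast

lemma integral_lagged_stationary:
  fixes r :: "int \<Rightarrow> 'a \<Rightarrow> real" and q :: "real \<times> real \<Rightarrow> real"
  assumes "strictly_stationary M r" "\<And>t. r t \<in> borel_measurable M" "q \<in> borel_measurable borel"
  shows "(\<integral>\<omega>. q (r t \<omega>, r (t - int h) \<omega>) \<partial>M) = (\<integral>\<omega>. q (r s \<omega>, r (s - int h) \<omega>) \<partial>M)"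
proof -
  define I where "I = {s - int h, s}"
  let ?N = "PiM I (\<lambda>_. borel :: real measure)"
  have "distr M ?N (\<lambda>\<omega>. \<lambda>i\<in>I. r (i + (t - s)) \<omega>) = distr M ?N (\<lambda>\<omega>. \<lambda>i\<in>I. r i \<omega>)"
    using assms(1) unfolding I_def by (rule strictly_stationary_distr_shift) simp
  moreover have "(\<lambda>z. q (z s, z (s - int h))) \<in> borel_measurable ?N"
    using assms(3) unfolding I_def by measurable
  ultimately have "(\<integral>\<omega>. q (r (s + (t - s)) \<omega>, r (s - int h + (t - s)) \<omega>) \<partial>M)
      = (\<integral>\<omega>. q (r s \<omega>, r (s - int h) \<omega>) \<partial>M)"
    using integral_eq_if_distr_eq[of M ?N "\<lambda>\<omega>. \<lambda>i\<in>I. r (i + (t - s)) \<omega>" "\<lambda>\<omega>. \<lambda>i\<in>I. r i \<omega>"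
        "\<lambda>z. q (z s, z (s - int h))"]
      assms(2) by (simp add: I_def measurable_restrict)
  then show ?thesis by (simp add: algebra_simps)
qed

lemma stationary_seq_lagged:
  fixes r :: "int \<Rightarrow> 'a \<Rightarrow> real" and q :: "real \<times> real \<Rightarrow> real"
  assumes "strictly_stationary M r" "\<And>t. r t \<in> borel_measurable M" "q \<in> borel_measurable borel"
  shows "stationary_seq M (\<lambda>i \<omega>. q (r (int i + int h + 1) \<omega>, r (int i + 1) \<omega>))"
  unfolding stationary_seq_def
proof
  fix n :: nat
  define I where "I = {1 .. int n + int h}"
  define g where "g z = (\<lambda>i\<in>{..<n}. q (z (int i + int h + 1), z (int i + 1)))" for z :: "int \<Rightarrow> real"
  let ?N = "PiM I (\<lambda>_. borel :: real measure)" and ?K = "PiM {..<n} (\<lambda>_. borel :: real measure)"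
  have "distr M ?N (\<lambda>\<omega>. \<lambda>j\<in>I. r (j + 1) \<omega>) = distr M ?N (\<lambda>\<omega>. \<lambda>j\<in>I. r j \<omega>)"
    using assms(1) unfolding I_def by (rule strictly_stationary_distr_shift) simp
  moreover have "g \<in> measurable ?N ?K"
    using assms(3) unfolding g_def I_def by measurable
  ultimately have "distr M ?K (\<lambda>\<omega>. g (\<lambda>j\<in>I. r (j + 1) \<omega>)) = distr M ?K (\<lambda>\<omega>. g (\<lambda>j\<in>I. r j \<omega>))"
    using distr_eq_compose[of M ?N "\<lambda>\<omega>. \<lambda>j\<in>I. r (j + 1) \<omega>" "\<lambda>\<omega>. \<lambda>j\<in>I. r j \<omega>" g ?K] assms(2)
    by (auto intro: measurable_restrict)
  moreover have "g (\<lambda>j\<in>I. r (j + 1) \<omega>) = (\<lambda>i\<in>{..<n}. q (r (int (Suc i) + int h + 1) \<omega>, r (int (Suc i) + 1) \<omega>))"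
    and "g (\<lambda>j\<in>I. r j \<omega>) = (\<lambda>i\<in>{..<n}. q (r (int i + int h + 1) \<omega>, r (int i + 1) \<omega>))" for \<omega>
    by (auto simp: g_def I_def algebra_simps intro!: restrict_ext)
  ultimately show "distr M ?K (\<lambda>\<omega>. \<lambda>i\<in>{..<n}. q (r (int (Suc i) + int h + 1) \<omega>, r (int (Suc i) + 1) \<omega>))
      = distr M ?K (\<lambda>\<omega>. \<lambda>i\<in>{..<n}. q (r (int i + int h + 1) \<omega>, r (int i + 1) \<omega>))"
    by simp
qed

lemma ergodic_seq_lagged:
  fixes r :: "int \<Rightarrow> 'a \<Rightarrow> real" and q :: "real \<times> real \<Rightarrow> real"
  assumes "ergodic_process M r" "q \<in> borel_measurable borel"
  shows "ergodic_seq M (\<lambda>i \<omega>. q (r (int i + int h + 1) \<omega>, r (int i + 1) \<omega>))"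
  unfolding ergodic_seq_def
proof (intro ballI impI)
  fix A :: "(nat \<Rightarrow> real) set"
  assume A: "A \<in> sets (PiM UNIV (\<lambda>_. borel))" and shift: "\<forall>x. x \<in> A \<longleftrightarrow> (\<lambda>i. x (Suc i)) \<in> A"
  define \<Phi> where "\<Phi> x = (\<lambda>i. q (x (int i + int h + 1), x (int i + 1)))" for x :: "int \<Rightarrow> real"
  have "\<Phi> \<in> measurable (PiM UNIV (\<lambda>_. borel)) (PiM UNIV (\<lambda>_. borel))"
    unfolding \<Phi>_def using assms(2) by (intro measurable_PiM_single') auto
  from measurable_sets[OF this A] have "\<Phi> -` A \<in> sets (PiM UNIV (\<lambda>_. borel))"
    by (simp add: space_PiM)
  moreover have "\<Phi> (\<lambda>t. x (t + 1)) = (\<lambda>i. \<Phi> x (Suc i))" for x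
    by (simp add: \<Phi>_def algebra_simps)
  then have "\<forall>x. x \<in> \<Phi> -` A \<longleftrightarrow> (\<lambda>t. x (t + 1)) \<in> \<Phi> -` A"
    using shift by simp
  ultimately have "shift_invariant (\<Phi> -` A)"
    by (simp add: shift_invariant_def)
  with assms(1) show "measure M {\<omega> \<in> space M. (\<lambda>i. q (r (int i + int h + 1) \<omega>, r (int i + 1) \<omega>)) \<in> A} \<in> {0, 1}"
    unfolding ergodic_process_def by (auto simp: \<Phi>_def)
qed

lemma lagged_sample_mean_limit:
  fixes r :: "int \<Rightarrow> 'a \<Rightarrow> real" and q :: "real \<times> real \<Rightarrow> real"
  assumes "prob_space M" "strictly_stationary M r" "ergodic_process M r"
    and [measurable]: "\<And>t. r t \<in> borel_measurable M" "q \<in> borel_measurable borel"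
    and "\<And>a b. integrable M (\<lambda>\<omega>. q (r a \<omega>, r b \<omega>))"
  shows "AE \<omega> in M. (\<lambda>n. (1 / real n) * (\<Sum>s\<in>{int h + 1 .. int n}. q (r s \<omega>, r (s - int h) \<omega>)))
           \<longlonglongrightarrow> (\<integral>\<omega>. q (r t \<omega>, r (t - int h) \<omega>) \<partial>M)"
proof -
  define Y where "Y i \<omega> = q (r (int i + int h + 1) \<omega>, r (int i + 1) \<omega>)" for i \<omega>
  have Y0: "(\<integral>\<omega>. Y 0 \<omega> \<partial>M) = (\<integral>\<omega>. q (r t \<omega>, r (t - int h) \<omega>) \<partial>M)"
    using integral_lagged_stationary[OF assms(2,4,5), of "int h + 1" h t] by (simp add: Y_def)
  have reindex: "(\<Sum>s\<in>{int h + 1 .. int (n + h)}. q (r s \<omega>, r (s - int h) \<omega>)) = (\<Sum>i<n. Y i \<omega>)"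
    for n \<omega>
    by (rule sum.reindex_bij_witness[of _ "\<lambda>i. int i + int h + 1" "\<lambda>s. nat (s - int h - 1)"])
      (auto simp: Y_def)
  have "AE \<omega> in M. (\<lambda>n. (\<Sum>i<n. Y i \<omega>) / real n) \<longlonglongrightarrow> (\<integral>\<omega>. Y 0 \<omega> \<partial>M)"
    unfolding Y_def using assms
    by (intro birkhoff_ergodic_theorem stationary_seq_lagged ergodic_seq_lagged) auto
  then show ?thesis
  proof eventually_elim
    case (elim \<omega>)
    define g where "g n = (1 / real n) * (\<Sum>s\<in>{int h + 1 .. int n}. q (r s \<omega>, r (s - int h) \<omega>))" for n
    have "(\<lambda>n. (\<Sum>i<n. Y i \<omega>) / real n * (real n / real (n + h)))
        \<longlonglongrightarrow> (\<integral>\<omega>. q (r t \<omega>, r (t - int h) \<omega>) \<partial>M) * 1"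
      using elim unfolding Y0 by (intro tendsto_mult) (simp, real_asymp)
    moreover have "(\<Sum>i<n. Y i \<omega>) / real n * (real n / real (n + h)) = g (n + h)" for n
      unfolding g_def reindex[symmetric] by (cases "n = 0") simp_all
    ultimately have "(\<lambda>n. g (n + h)) \<longlonglongrightarrow> (\<integral>\<omega>. q (r t \<omega>, r (t - int h) \<omega>) \<partial>M)"
      by simp
    then show ?case
      unfolding g_def[symmetric] by (rule LIMSEQ_offset)
  qed
qed

lemma integrable_mult_if_square_integrable:
  fixes f g :: "'a \<Rightarrow> real"
  assumes "integrable M (\<lambda>x. (f x)\<^sup>2)" "integrable M (\<lambda>x. (g x)\<^sup>2)"
    and "f \<in> borel_measurable M" "g \<in> borel_measurable M"
  shows "integrable M (\<lambda>x. f x * g x)"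
proof (rule Bochner_Integration.integrable_bound)
  show "integrable M (\<lambda>x. (f x)\<^sup>2 + (g x)\<^sup>2)"
    using assms(1,2) by (rule Bochner_Integration.integrable_add)
  have "\<bar>a * b\<bar> \<le> a\<^sup>2 + b\<^sup>2" for a b :: real
  proof -
    have "2 * \<bar>a * b\<bar> \<le> a\<^sup>2 + b\<^sup>2"
      using sum_squares_bound[of "\<bar>a\<bar>" "\<bar>b\<bar>"] by (simp add: abs_mult mult.assoc)
    then show ?thesis by simp
  qed
  then show "AE x in M. norm (f x * g x) \<le> norm ((f x)\<^sup>2 + (g x)\<^sup>2)"
    by simp
qed (use assms(3,4) in simp)

lemma gamma0_hat_limit:
  fixes r :: "int \<Rightarrow> 'a \<Rightarrow> real"
  assumes "prob_space M" "strictly_stationary M r" "ergodic_process M r"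
    and "\<And>t. r t \<in> borel_measurable M" "\<And>t. integrable M (\<lambda>\<omega>. (r t \<omega>)\<^sup>2)"
  shows "AE \<omega> in M. (\<lambda>n. gamma0_hat r n h \<omega>) \<longlonglongrightarrow> (\<integral>\<omega>. r t \<omega> * r (t - int h) \<omega> \<partial>M)"
proof -
  have "(\<lambda>(x, y). x * y :: real) \<in> borel_measurable borel"
    unfolding borel_prod[symmetric] by measurable
  moreover have "integrable M (\<lambda>\<omega>. r a \<omega> * r b \<omega>)" for a b
    by (rule integrable_mult_if_square_integrable[OF assms(5,5,4,4)])
  ultimately show ?thesis
    using lagged_sample_mean_limit[OF assms(1-4), of "\<lambda>(x, y). x * y"] by (simp add: gamma0_hat_def)
qed

lemma gammaa_hat_limit:
  fixes r :: "int \<Rightarrow> 'a \<Rightarrow> real"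
  assumes "prob_space M" "strictly_stationary M r" "ergodic_process M r"
    and [measurable]: "\<And>t. r t \<in> borel_measurable M"
  shows "AE \<omega> in M. (\<lambda>n. gammaa_hat r n h \<omega>) \<longlonglongrightarrow> measure M (both_nz M r t h)"
proof -
  interpret prob_space M by (rule assms(1))
  define q where "q = (\<lambda>(x::real, y::real). (if x \<noteq> 0 then 1 else 0) * (if y \<noteq> 0 then 1 else (0::real)))"
  have q_meas: "q \<in> borel_measurable borel"
    unfolding q_def borel_prod[symmetric] by measurable
  have q_int: "integrable M (\<lambda>\<omega>. q (r a \<omega>, r b \<omega>))" for a b
    using q_meas by (intro integrable_const_bound[where B=1]) (auto simp: q_def)
  have "both_nz M r t h \<in> sets M"
    unfolding both_nz_def nz_ind_def by measurable
  then have "measure M (both_nz M r t h) = (\<integral>\<omega>. indicator (both_nz M r t h) \<omega> \<partial>M)"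
    by simp
  also have "\<dots> = (\<integral>\<omega>. q (r t \<omega>, r (t - int h) \<omega>) \<partial>M)"
    by (rule Bochner_Integration.integral_cong[OF refl]) (auto simp: both_nz_def nz_ind_def q_def indicator_def)
  finally show ?thesis
    using lagged_sample_mean_limit[OF assms(1-4) q_meas q_int, of h t]
    by (simp add: gammaa_hat_def nz_ind_def q_def)
qed

section \<open>Consistency of the ratio estimator\<close>

lemma integral_eq_cond_exp_event_mult_measure:
  assumes "measure M B \<noteq> 0" and "\<And>\<omega>. \<omega> \<in> space M \<Longrightarrow> \<omega> \<notin> B \<Longrightarrow> X \<omega> = 0"
  shows "(\<integral>\<omega>. X \<omega> \<partial>M) = cond_exp_event M X B * measure M B"
proof -
  have "(\<integral>\<omega>. X \<omega> \<partial>M) = (\<integral>\<omega>. indicator B \<omega> * X \<omega> \<partial>M)"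
    by (rule Bochner_Integration.integral_cong[OF refl]) (auto simp: indicator_def assms(2))
  with assms(1) show ?thesis
    by (simp add: cond_exp_event_def)
qed

lemma integral_scaled_lagged_product:
  fixes r eps :: "int \<Rightarrow> 'a \<Rightarrow> real"
  assumes r: "r = (\<lambda>t \<omega>. \<sigma> * eps t \<omega>)" and "\<sigma> \<noteq> 0" and "measure M (both_nz M r t h) \<noteq> 0"
  shows "(\<integral>\<omega>. r t \<omega> * r (t - int h) \<omega> \<partial>M)
    = \<sigma>\<^sup>2 * cond_exp_event M (\<lambda>\<omega>. eps t \<omega> * eps (t - int h) \<omega>) (both_nz M r t h) * measure M (both_nz M r t h)"
proof -
  have "(\<integral>\<omega>. r t \<omega> * r (t - int h) \<omega> \<partial>M) = \<sigma>\<^sup>2 * (\<integral>\<omega>. eps t \<omega> * eps (t - int h) \<omega> \<partial>M)"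
    by (simp add: r power2_eq_square ac_simps)
  also have "(\<integral>\<omega>. eps t \<omega> * eps (t - int h) \<omega> \<partial>M)
      = cond_exp_event M (\<lambda>\<omega>. eps t \<omega> * eps (t - int h) \<omega>) (both_nz M r t h) * measure M (both_nz M r t h)"
    using assms(2) by (intro integral_eq_cond_exp_event_mult_measure assms(3))
      (auto simp: both_nz_def nz_ind_def r split: if_splits)
  finally show ?thesis
    by (simp add: mult.assoc)
qed

lemma rho_pr_hat_limit:
  fixes r :: "int \<Rightarrow> 'a \<Rightarrow> real"
  assumes "(\<lambda>n. gamma0_hat r n h \<omega>) \<longlonglongrightarrow> c * \<rho> * p" "(\<lambda>n. gamma0_hat r n 0 \<omega>) \<longlonglongrightarrow> c * p0"
    and "(\<lambda>n. gammaa_hat r n 0 \<omega>) \<longlonglongrightarrow> p0" "(\<lambda>n. gammaa_hat r n h \<omega>) \<longlonglongrightarrow> p"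
    and "c \<noteq> 0" "p0 \<noteq> 0" "p \<noteq> 0"
  shows "(\<lambda>n. rho_pr_hat r n h \<omega>) \<longlonglongrightarrow> \<rho>"
proof -
  have "(\<lambda>n. gamma0_hat r n h \<omega> / gamma0_hat r n 0 \<omega> * gammaa_hat r n 0 \<omega> / gammaa_hat r n h \<omega>)
      \<longlonglongrightarrow> c * \<rho> * p / (c * p0) * p0 / p"
    using assms by (intro tendsto_intros) auto
  with assms(5-7) show ?thesis
    by (simp add: rho_pr_hat_def rho0_hat_def)
qed

theorem proposition1:
  fixes M :: "'a measure" and eps :: "int \<Rightarrow> 'a \<Rightarrow> real" and \<sigma> :: real and m :: nat
  defines "r \<equiv> (\<lambda>t \<omega>. \<sigma> * eps t \<omega>)"
  assumes "prob_space M"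
    and "m \<ge> 1"
    and "\<sigma> > 0"
    and meas: "\<And>t. eps t \<in> borel_measurable M"
    and "\<And>t. cond_exp_event M (eps t) (both_nz M r t 0) = 0"
    and "\<And>t. cond_exp_event M (\<lambda>\<omega>. (eps t \<omega>)\<^sup>2) (both_nz M r t 0) = 1"
    and "\<And>t h. h \<le> m \<Longrightarrow> measure M (both_nz M r t h) > 0"
    and "strictly_stationary M r"
    and "ergodic_process M r"
    and "\<And>t. integrable M (\<lambda>\<omega>. (r t \<omega>)\<^sup>2)"
    and "\<And>t. (\<integral>\<omega>. r t \<omega> \<partial>M) = 0"
  shows "\<forall>t. AE \<omega> in M. \<forall>h\<in>{1..m}.
           (\<lambda>n. rho_pr_hat r n h \<omega>)
             \<longlonglongrightarrow> cond_exp_event M (\<lambda>\<omega>. eps t \<omega> * eps (t - int h) \<omega>) (both_nz M r t h)"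
proof
  fix t :: int
  have r: "r = (\<lambda>t \<omega>. \<sigma> * eps t \<omega>)"
    by (simp add: r_def)
  have [measurable]: "r s \<in> borel_measurable M" for s
    unfolding r using meas by measurable
  define P where "P h = measure M (both_nz M r t h)" for h
  define \<rho> where "\<rho> h = cond_exp_event M (\<lambda>\<omega>. eps t \<omega> * eps (t - int h) \<omega>) (both_nz M r t h)" for h
  have P_pos: "0 < P h" if "h \<le> m" for h
    using assms(8) that by (simp add: P_def)
  have lim_gamma0: "AE \<omega> in M. (\<lambda>n. gamma0_hat r n h \<omega>) \<longlonglongrightarrow> \<sigma>\<^sup>2 * \<rho> h * P h" if "h \<le> m" for h
    using gamma0_hat_limit[OF assms(2,9,10) _ assms(11), of h t] P_pos[OF that] \<open>\<sigma> > 0\<close>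
      integral_scaled_lagged_product[OF r, of M t h]
    by (simp add: P_def \<rho>_def)
  have "\<rho> 0 = 1"
    using assms(7)[of t] by (simp add: \<rho>_def power2_eq_square)
  with lim_gamma0[OF le0] have lim_gamma0_0: "AE \<omega> in M. (\<lambda>n. gamma0_hat r n 0 \<omega>) \<longlonglongrightarrow> \<sigma>\<^sup>2 * P 0"
    by simp
  have lim_gammaa: "AE \<omega> in M. (\<lambda>n. gammaa_hat r n h \<omega>) \<longlonglongrightarrow> P h" for h
    unfolding P_def by (rule gammaa_hat_limit[OF assms(2,9,10)]) simp
  have "AE \<omega> in M. (\<lambda>n. rho_pr_hat r n h \<omega>) \<longlonglongrightarrow> \<rho> h" if "h \<in> {1..m}" for h
  proof -
    from that have "h \<le> m" by simp
    from lim_gamma0[OF this] lim_gamma0_0 lim_gammaa[of 0] lim_gammaa[of h] show ?thesis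
    proof eventually_elim
      case (elim \<omega>)
      show ?case
        by (rule rho_pr_hat_limit[OF elim]) (use P_pos[OF le0] P_pos[OF \<open>h \<le> m\<close>] \<open>\<sigma> > 0\<close> in auto)
    qed
  qed
  then show "AE \<omega> in M. \<forall>h\<in>{1..m}. (\<lambda>n. rho_pr_hat r n h \<omega>)
      \<longlonglongrightarrow> cond_exp_event M (\<lambda>\<omega>. eps t \<omega> * eps (t - int h) \<omega>) (both_nz M r t h)"
    unfolding \<rho>_def by (intro AE_ball_countable') auto
qed

end
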